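(* Let $\mathcal{X}_0,\tilde{\mathcal{X}}_0,\mathcal{U}_0,\tilde{\mathcal{U}}_0$ be Polish spaces, let $F_*:\mathcal{X}_0\times\mathcal{U}_0\to\tilde{\mathcal{X}}_0\times\tilde{\mathcal{U}}_0$ be a bijection, and define the involution $F:\tilde{\mathcal{X}}_0\times\mathcal{X}_0\times\mathcal{U}_0\to\tilde{\mathcal{X}}_0\times\mathcal{X}_0\times\mathcal{U}_0$ by \[F(a,b,c):=\left(F_*^{(1)}(b,c),\,F_*^{-1}\left(a,F_*^{(2)}(b,c)\right)\right).\] For probability measures $\mu,\nu,\tilde\mu$ on $\mathcal{X}_0,\mathcal{U}_0,\tilde{\mathcal{X}}_0$ respectively, the following are equivalent: (a) $F^{(2,3)}(\tilde\mu\times\mu\times\nu)=\mu\times\nu$; (b) $F(\tilde\mu\times\mu\times\nu)=\tilde\mu\times\mu\times\nu$; (c) there exists a probability measure $\tilde\nu$ on $\tilde{\mathcal{U}}_0$ such that $F_*(\mu\times\nu)=\tilde\mu\times\tilde\nu$.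
   Context: A superscript $(i)$ denotes the $i$th coordinate of a map, and $(2,3)$ the pair of the 2nd and 3rd coordinates. For a measurable map $G$ and a measure $m$, $G(m):=m\circ G^{-1}$ is the pushforward. *)

theory Defs
  imports "HOL-Analysis.Analysis" "HOL-Probability.Probability"
begin

definition Finvol ::
  "('x \<times> 'u \<Rightarrow> 'tx \<times> 'tu) \<Rightarrow> 'tx \<times> 'x \<times> 'u \<Rightarrow> 'tx \<times> 'x \<times> 'u" where
  "Finvol Fs = (\<lambda>(a, b, c). (fst (Fs (b, c)), inv Fs (a, snd (Fs (b, c)))))"

end

(*
  Write Q for the image of mu x nu under F_* and Q2 for the second marginal of Q.
  Since the last two coordinates of F(a,b,c) are F_*^-1(a, F_*^(2)(b,c)), condition (a)
  says F_*^-1(tmu x Q2) = mu x nu, i.e. Q = tmu x Q2; condition (c) says the same, because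
  a factorisation Q = tmu x tnu forces tnu = Q2.  Conjugating by (a,m) |-> (a, F_* m) turns
  F into the transposition (a,b,c) |-> (b,a,c), so (b) says that tmu x Q is invariant under
  this transposition.  Projecting an invariant measure onto the first and third coordinates
  gives Q = tmu x Q2, and conversely tmu x tmu x Q2 is invariant.
*)
theory Submission
  imports Defs
begin

lemma distr_distr_left_inverse:
  assumes f: "f \<in> A \<rightarrow>\<^sub>M B" and g: "g \<in> B \<rightarrow>\<^sub>M A"
    and gf: "\<And>x. x \<in> space A \<Longrightarrow> g (f x) = x" and sets_X: "sets X = sets A"
  shows "distr (distr X B f) A g = X"
proof -
  have "f \<in> X \<rightarrow>\<^sub>M B"
    using f by (simp add: measurable_cong_sets[OF sets_X refl])
  then have "distr (distr X B f) A g = distr X A (g \<circ> f)"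
    using g by (simp add: distr_distr)
  also have "\<dots> = distr X A (\<lambda>x. x)"
    using gf sets_eq_imp_space_eq[OF sets_X] by (intro distr_cong) auto
  also have "\<dots> = X"
    using sets_X by (simp add: distr_id2)
  finally show ?thesis .
qed

lemma distr_eq_iff_eq_distr_inverse:
  assumes "f \<in> A \<rightarrow>\<^sub>M B" "g \<in> B \<rightarrow>\<^sub>M A"
    and "\<And>x. x \<in> space A \<Longrightarrow> g (f x) = x" "\<And>y. y \<in> space B \<Longrightarrow> f (g y) = y"
    and "sets X = sets A" "sets Y = sets B"
  shows "distr X B f = Y \<longleftrightarrow> X = distr Y A g"
  using distr_distr_left_inverse[of f A B g X] distr_distr_left_inverse[of g B A f Y] assms
  by auto

lemma distr_pair_snd:
  assumes "prob_space M" "sigma_finite_measure N"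
  shows "distr (M \<Otimes>\<^sub>M N) N snd = N"
proof -
  interpret M: prob_space M by fact
  interpret N: sigma_finite_measure N by fact
  interpret pair_sigma_finite N M ..
  have "distr (M \<Otimes>\<^sub>M N) N snd = distr (distr (M \<Otimes>\<^sub>M N) (N \<Otimes>\<^sub>M M) (\<lambda>(x, y). (y, x))) N fst"
    by (simp add: distr_distr comp_def case_prod_beta)
  also have "\<dots> = N"
    by (simp flip: distr_pair_swap add: M.distr_pair_fst)
  finally show ?thesis .
qed

lemma pair_measure_distr_right:
  assumes "g \<in> N \<rightarrow>\<^sub>M T" "sigma_finite_measure (distr N T g)" "sets M = sets S"
  shows "M \<Otimes>\<^sub>M distr N T g = distr (M \<Otimes>\<^sub>M N) (S \<Otimes>\<^sub>M T) (\<lambda>(x, y). (x, g y))"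
  using pair_measure_distr[of "\<lambda>x. x" M S g N T] assms by (simp add: distr_id2)

lemma distr_pair_assoc:
  assumes "sigma_finite_measure M1" "sigma_finite_measure M2" "sigma_finite_measure M3"
  shows "distr (M1 \<Otimes>\<^sub>M (M2 \<Otimes>\<^sub>M M3)) ((M1 \<Otimes>\<^sub>M M2) \<Otimes>\<^sub>M M3) (\<lambda>(a, b, c). ((a, b), c))
     = (M1 \<Otimes>\<^sub>M M2) \<Otimes>\<^sub>M M3"
proof (rule pair_measure_eqI[symmetric])
  interpret M1: sigma_finite_measure M1 by fact
  interpret M2: sigma_finite_measure M2 by fact
  interpret M3: sigma_finite_measure M3 by fact
  interpret M12: pair_sigma_finite M1 M2 ..
  interpret M23: pair_sigma_finite M2 M3 ..
  show "sigma_finite_measure (M1 \<Otimes>\<^sub>M M2)" "sigma_finite_measure M3" ..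
  fix C B assume C: "C \<in> sets (M1 \<Otimes>\<^sub>M M2)" and B: "B \<in> sets M3"
  have assoc: "(\<lambda>(a, b, c). ((a, b), c)) \<in> M1 \<Otimes>\<^sub>M (M2 \<Otimes>\<^sub>M M3) \<rightarrow>\<^sub>M (M1 \<Otimes>\<^sub>M M2) \<Otimes>\<^sub>M M3"
    by measurable
  let ?S = "(\<lambda>(a, b, c). ((a, b), c)) -` (C \<times> B) \<inter> space (M1 \<Otimes>\<^sub>M (M2 \<Otimes>\<^sub>M M3))"
  have S: "?S \<in> sets (M1 \<Otimes>\<^sub>M (M2 \<Otimes>\<^sub>M M3))"
    using C B by (intro measurable_sets[OF assoc]) simp
  have slice: "Pair a -` ?S = (Pair a -` C) \<times> B" if "a \<in> space M1" for a
    using that sets.sets_into_space[OF C] sets.sets_into_space[OF B]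
    by (auto simp: space_pair_measure)
  have "emeasure (distr (M1 \<Otimes>\<^sub>M (M2 \<Otimes>\<^sub>M M3)) ((M1 \<Otimes>\<^sub>M M2) \<Otimes>\<^sub>M M3) (\<lambda>(a, b, c). ((a, b), c))) (C \<times> B)
      = emeasure (M1 \<Otimes>\<^sub>M (M2 \<Otimes>\<^sub>M M3)) ?S"
    using C B by (simp add: emeasure_distr[OF assoc])
  also have "\<dots> = (\<integral>\<^sup>+ a. emeasure (M2 \<Otimes>\<^sub>M M3) (Pair a -` ?S) \<partial>M1)"
    using S by (rule M23.emeasure_pair_measure_alt)
  also have "\<dots> = (\<integral>\<^sup>+ a. emeasure M2 (Pair a -` C) * emeasure M3 B \<partial>M1)"
  proof (rule nn_integral_cong)
    fix a assume "a \<in> space M1"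
    then show "emeasure (M2 \<Otimes>\<^sub>M M3) (Pair a -` ?S) = emeasure M2 (Pair a -` C) * emeasure M3 B"
      using C B by (simp only: slice) (simp add: sets_Pair1 M3.emeasure_pair_measure_Times)
  qed
  also have "\<dots> = (\<integral>\<^sup>+ a. emeasure M2 (Pair a -` C) \<partial>M1) * emeasure M3 B"
    using C by (intro nn_integral_multc M2.measurable_emeasure_Pair)
  also have "\<dots> = emeasure (M1 \<Otimes>\<^sub>M M2) C * emeasure M3 B"
    using C by (simp add: M2.emeasure_pair_measure_alt)
  finally show "emeasure (M1 \<Otimes>\<^sub>M M2) C * emeasure M3 B =
    emeasure (distr (M1 \<Otimes>\<^sub>M (M2 \<Otimes>\<^sub>M M3)) ((M1 \<Otimes>\<^sub>M M2) \<Otimes>\<^sub>M M3) (\<lambda>(a, b, c). ((a, b), c))) (C \<times> B)"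
    by simp
qed simp

lemma distr_swap_left_pair_measure:
  assumes "sigma_finite_measure M1" "sigma_finite_measure M2" "sigma_finite_measure M3"
  shows "distr ((M1 \<Otimes>\<^sub>M M2) \<Otimes>\<^sub>M M3) ((M2 \<Otimes>\<^sub>M M1) \<Otimes>\<^sub>M M3) (\<lambda>((a, b), c). ((b, a), c))
     = (M2 \<Otimes>\<^sub>M M1) \<Otimes>\<^sub>M M3"
proof -
  interpret M1: sigma_finite_measure M1 by fact
  interpret M2: sigma_finite_measure M2 by fact
  interpret M3: sigma_finite_measure M3 by fact
  interpret M21: pair_sigma_finite M2 M1 ..
  have "(M2 \<Otimes>\<^sub>M M1) \<Otimes>\<^sub>M M3 = distr (M1 \<Otimes>\<^sub>M M2) (M2 \<Otimes>\<^sub>M M1) (\<lambda>(a, b). (b, a)) \<Otimes>\<^sub>M distr M3 M3 (\<lambda>c. c)"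
    by (simp flip: M21.distr_pair_swap)
  also have "\<dots> = distr ((M1 \<Otimes>\<^sub>M M2) \<Otimes>\<^sub>M M3) ((M2 \<Otimes>\<^sub>M M1) \<Otimes>\<^sub>M M3) (\<lambda>(x, c). ((\<lambda>(a, b). (b, a)) x, c))"
    by (intro pair_measure_distr) (simp_all add: M3.sigma_finite_measure_axioms)
  also have "\<dots> = distr ((M1 \<Otimes>\<^sub>M M2) \<Otimes>\<^sub>M M3) ((M2 \<Otimes>\<^sub>M M1) \<Otimes>\<^sub>M M3) (\<lambda>((a, b), c). ((b, a), c))"
    by (intro distr_cong) auto
  finally show ?thesis ..
qed

lemma distr_swap12_pair_measure:
  assumes P: "sigma_finite_measure P" "sets P = sets A"
    and R: "sigma_finite_measure R" "sets R = sets B"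
  shows "distr (P \<Otimes>\<^sub>M (P \<Otimes>\<^sub>M R)) (A \<Otimes>\<^sub>M (A \<Otimes>\<^sub>M B)) (\<lambda>(a, b, c). (b, a, c))
    = P \<Otimes>\<^sub>M (P \<Otimes>\<^sub>M R)" (is "distr _ ?ABB ?\<sigma> = _")
proof -
  let ?ABB' = "(A \<Otimes>\<^sub>M A) \<Otimes>\<^sub>M B"
  let ?\<alpha> = "\<lambda>(a, b, c). ((a, b), c)" and ?\<beta> = "\<lambda>((a, b), c). (a, b, c)"
  let ?swap = "\<lambda>((a, b), c). ((b, a), c)"
  have sets_PPR[measurable_cong]: "sets ((P \<Otimes>\<^sub>M P) \<Otimes>\<^sub>M R) = sets ?ABB'"
    by (intro sets_pair_measure_cong P(2) R(2))
  have sets_PPR'[measurable_cong]: "sets (P \<Otimes>\<^sub>M (P \<Otimes>\<^sub>M R)) = sets ?ABB"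
    by (intro sets_pair_measure_cong P(2) R(2))
  have [measurable]: "?\<beta> \<in> ?ABB' \<rightarrow>\<^sub>M ?ABB"
    unfolding case_prod_beta by measurable
  have [measurable]: "?swap \<in> ?ABB' \<rightarrow>\<^sub>M ?ABB'"
    unfolding case_prod_beta by measurable
  have "distr (P \<Otimes>\<^sub>M (P \<Otimes>\<^sub>M R)) ?ABB' ?\<alpha> = (P \<Otimes>\<^sub>M P) \<Otimes>\<^sub>M R"
    using distr_pair_assoc[OF P(1) P(1) R(1)] by (simp add: sets_PPR cong: distr_cong)
  then have assoc: "P \<Otimes>\<^sub>M (P \<Otimes>\<^sub>M R) = distr ((P \<Otimes>\<^sub>M P) \<Otimes>\<^sub>M R) ?ABB ?\<beta>"
    by (subst (asm) distr_eq_iff_eq_distr_inverse[where g = ?\<beta>]) (auto simp: sets_PPR sets_PPR')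
  have swap: "distr ((P \<Otimes>\<^sub>M P) \<Otimes>\<^sub>M R) ?ABB' ?swap = (P \<Otimes>\<^sub>M P) \<Otimes>\<^sub>M R"
    using distr_swap_left_pair_measure[OF P(1) P(1) R(1)] by (simp add: sets_PPR cong: distr_cong)
  have "distr (P \<Otimes>\<^sub>M (P \<Otimes>\<^sub>M R)) ?ABB ?\<sigma> = distr ((P \<Otimes>\<^sub>M P) \<Otimes>\<^sub>M R) ?ABB (?\<sigma> \<circ> ?\<beta>)"
    unfolding assoc by (simp add: distr_distr)
  also have "\<dots> = distr ((P \<Otimes>\<^sub>M P) \<Otimes>\<^sub>M R) ?ABB (?\<beta> \<circ> ?swap)"
    by (intro distr_cong) auto
  also have "\<dots> = distr (distr ((P \<Otimes>\<^sub>M P) \<Otimes>\<^sub>M R) ?ABB' ?swap) ?ABB ?\<beta>"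
    by (simp add: distr_distr)
  also have "\<dots> = P \<Otimes>\<^sub>M (P \<Otimes>\<^sub>M R)"
    unfolding swap assoc ..
  finally show ?thesis .
qed

lemma distr_swap12_pair_measure_eq_iff:
  assumes P: "prob_space P" "sets P = sets A" and Q: "prob_space Q" "sets Q = sets (A \<Otimes>\<^sub>M B)"
  shows "distr (P \<Otimes>\<^sub>M Q) (A \<Otimes>\<^sub>M (A \<Otimes>\<^sub>M B)) (\<lambda>(a, b, c). (b, a, c)) = P \<Otimes>\<^sub>M Q
    \<longleftrightarrow> Q = P \<Otimes>\<^sub>M distr Q B snd" (is "distr _ ?ABB ?\<sigma> = _ \<longleftrightarrow> _")
proof
  note [measurable_cong] = P(2) Q(2)
  define R where "R = distr Q B snd"
  have R: "prob_space R"
    unfolding R_def using Q(1) by (auto intro: prob_space.prob_space_distr)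
  have [measurable_cong]: "sets (P \<Otimes>\<^sub>M Q) = sets ?ABB"
    by (intro sets_pair_measure_cong P(2) Q(2))
  assume invariant: "distr (P \<Otimes>\<^sub>M Q) ?ABB ?\<sigma> = P \<Otimes>\<^sub>M Q"
  have "Q = distr (P \<Otimes>\<^sub>M Q) Q snd"
    using P(1) Q(1) by (simp add: distr_pair_snd prob_space_imp_sigma_finite)
  also have "\<dots> = distr (distr (P \<Otimes>\<^sub>M Q) ?ABB ?\<sigma>) (A \<Otimes>\<^sub>M B) (\<lambda>(a, b, c). (a, c))"
    by (subst distr_distr) (auto intro!: distr_cong simp: Q(2))
  also have "\<dots> = distr (P \<Otimes>\<^sub>M Q) (A \<Otimes>\<^sub>M B) (\<lambda>(x, y). (x, snd y))"
    unfolding invariant by (intro distr_cong) auto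
  also have "\<dots> = P \<Otimes>\<^sub>M R"
    unfolding R_def using P(2) R(1)
    by (intro pair_measure_distr_right[symmetric]) (simp_all add: R_def prob_space_imp_sigma_finite)
  finally show "Q = P \<Otimes>\<^sub>M distr Q B snd"
    unfolding R_def .
next
  assume Q_eq: "Q = P \<Otimes>\<^sub>M distr Q B snd"
  have "prob_space (distr Q B snd)"
    using Q by (intro prob_space.prob_space_distr) (simp_all add: measurable_cong_sets[OF Q(2) refl])
  then have "distr (P \<Otimes>\<^sub>M (P \<Otimes>\<^sub>M distr Q B snd)) ?ABB ?\<sigma> = P \<Otimes>\<^sub>M (P \<Otimes>\<^sub>M distr Q B snd)"
    using P by (intro distr_swap12_pair_measure) (simp_all add: prob_space_imp_sigma_finite)
  then show "distr (P \<Otimes>\<^sub>M Q) ?ABB ?\<sigma> = P \<Otimes>\<^sub>M Q"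
    unfolding Q_eq[symmetric] .
qed

lemma ex_pair_measure_eq_iff_snd_marginal:
  assumes P: "prob_space P" and Q: "prob_space Q" "sets Q = sets (A \<Otimes>\<^sub>M B)"
  shows "(\<exists>N. prob_space N \<and> sets N = sets B \<and> Q = P \<Otimes>\<^sub>M N) \<longleftrightarrow> Q = P \<Otimes>\<^sub>M distr Q B snd"
proof
  assume "\<exists>N. prob_space N \<and> sets N = sets B \<and> Q = P \<Otimes>\<^sub>M N"
  then obtain N where N: "prob_space N" "sets N = sets B" and Q_eq: "Q = P \<Otimes>\<^sub>M N"
    by blast
  have "distr Q B snd = distr (P \<Otimes>\<^sub>M N) N snd"
    using Q_eq N(2) by (intro distr_cong) simp_all
  also have "\<dots> = N"
    using P N(1) by (simp add: distr_pair_snd prob_space_imp_sigma_finite)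
  finally show "Q = P \<Otimes>\<^sub>M distr Q B snd"
    using Q_eq by simp
next
  assume "Q = P \<Otimes>\<^sub>M distr Q B snd"
  moreover have "prob_space (distr Q B snd)"
    using Q by (intro prob_space.prob_space_distr) (simp_all add: measurable_cong_sets[OF Q(2) refl])
  ultimately show "\<exists>N. prob_space N \<and> sets N = sets B \<and> Q = P \<Otimes>\<^sub>M N"
    by auto
qed

context
  fixes Fs :: "'x \<times> 'u \<Rightarrow> 't \<times> 'v"
    and XU :: "('x \<times> 'u) measure" and T :: "'t measure" and V :: "'v measure"
  assumes bij_Fs: "bij Fs"
    and Fs_measurable[measurable]: "Fs \<in> XU \<rightarrow>\<^sub>M T \<Otimes>\<^sub>M V"
    and inv_Fs_measurable[measurable]: "inv Fs \<in> T \<Otimes>\<^sub>M V \<rightarrow>\<^sub>M XU"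
begin

lemma distr_snd_Finvol_eq_iff:
  assumes P: "prob_space P" "sets P = sets T" and M: "prob_space M" "sets M = sets XU"
  shows "distr (P \<Otimes>\<^sub>M M) XU (snd \<circ> Finvol Fs) = M
    \<longleftrightarrow> distr M (T \<Otimes>\<^sub>M V) Fs = P \<Otimes>\<^sub>M distr (distr M (T \<Otimes>\<^sub>M V) Fs) V snd"
proof -
  note [measurable_cong] = P(2) M(2)
  define R where "R = distr M V (snd \<circ> Fs)"
  have R: "prob_space R" "sets R = sets V"
    unfolding R_def using M(1) by (auto intro: prob_space.prob_space_distr)
  have snd_marginal: "distr (distr M (T \<Otimes>\<^sub>M V) Fs) V snd = R"
    unfolding R_def by (simp add: distr_distr)
  have "P \<Otimes>\<^sub>M R = distr (P \<Otimes>\<^sub>M M) (T \<Otimes>\<^sub>M V) (\<lambda>(a, m). (a, (snd \<circ> Fs) m))"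
    unfolding R_def using P(2) R(1) by (intro pair_measure_distr_right) (simp_all add: R_def prob_space_imp_sigma_finite)
  then have "distr (P \<Otimes>\<^sub>M R) XU (inv Fs) = distr (P \<Otimes>\<^sub>M M) XU (inv Fs \<circ> (\<lambda>(a, m). (a, snd (Fs m))))"
    by (simp add: distr_distr)
  also have "\<dots> = distr (P \<Otimes>\<^sub>M M) XU (snd \<circ> Finvol Fs)"
    by (intro distr_cong) (auto simp: Finvol_def)
  finally have "distr (P \<Otimes>\<^sub>M M) XU (snd \<circ> Finvol Fs) = distr (P \<Otimes>\<^sub>M R) XU (inv Fs)" ..
  moreover have "distr (P \<Otimes>\<^sub>M R) XU (inv Fs) = M \<longleftrightarrow> P \<Otimes>\<^sub>M R = distr M (T \<Otimes>\<^sub>M V) Fs"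
    using M(2) sets_pair_measure_cong[OF P(2) R(2)] bij_Fs
    by (intro distr_eq_iff_eq_distr_inverse) (simp_all add: bij_is_inj bij_is_surj surj_f_inv_f)
  ultimately show ?thesis
    unfolding snd_marginal by auto
qed

lemma distr_Finvol_eq_iff:
  assumes P: "prob_space P" "sets P = sets T" and M: "prob_space M" "sets M = sets XU"
  shows "distr (P \<Otimes>\<^sub>M M) (T \<Otimes>\<^sub>M XU) (Finvol Fs) = P \<Otimes>\<^sub>M M
    \<longleftrightarrow> distr M (T \<Otimes>\<^sub>M V) Fs = P \<Otimes>\<^sub>M distr (distr M (T \<Otimes>\<^sub>M V) Fs) V snd"
proof -
  note [measurable_cong] = P(2) M(2)
  define Q where "Q = distr M (T \<Otimes>\<^sub>M V) Fs"
  have Q: "prob_space Q" "sets Q = sets (T \<Otimes>\<^sub>M V)"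
    unfolding Q_def using M(1) by (auto intro: prob_space.prob_space_distr)
  let ?TTV = "T \<Otimes>\<^sub>M (T \<Otimes>\<^sub>M V)"
  let ?\<Phi> = "\<lambda>(a, m). (a, Fs m)" and ?\<Psi> = "\<lambda>(a, q). (a, inv Fs q)"
  let ?\<sigma> = "\<lambda>(a, b, c). (b, a, c)"
  have lift: "distr (P \<Otimes>\<^sub>M M) ?TTV ?\<Phi> = P \<Otimes>\<^sub>M Q"
    unfolding Q_def using P(2) Q(1)
    by (intro pair_measure_distr_right[symmetric]) (simp_all add: Q_def prob_space_imp_sigma_finite)
  have "distr (P \<Otimes>\<^sub>M M) (T \<Otimes>\<^sub>M XU) (Finvol Fs) = distr (P \<Otimes>\<^sub>M M) (T \<Otimes>\<^sub>M XU) (?\<Psi> \<circ> ?\<sigma> \<circ> ?\<Phi>)"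
    by (intro distr_cong) (auto simp: Finvol_def split: prod.split)
  also have "\<dots> = distr (distr (P \<Otimes>\<^sub>M Q) ?TTV ?\<sigma>) (T \<Otimes>\<^sub>M XU) ?\<Psi>"
    unfolding lift[symmetric] by (simp add: distr_distr comp_assoc)
  finally have conj: "distr (P \<Otimes>\<^sub>M M) (T \<Otimes>\<^sub>M XU) (Finvol Fs) = distr (distr (P \<Otimes>\<^sub>M Q) ?TTV ?\<sigma>) (T \<Otimes>\<^sub>M XU) ?\<Psi>" .
  have "distr (distr (P \<Otimes>\<^sub>M Q) ?TTV ?\<sigma>) (T \<Otimes>\<^sub>M XU) ?\<Psi> = P \<Otimes>\<^sub>M M
      \<longleftrightarrow> distr (P \<Otimes>\<^sub>M Q) ?TTV ?\<sigma> = distr (P \<Otimes>\<^sub>M M) ?TTV ?\<Phi>"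
    using sets_pair_measure_cong[OF P(2) M(2)]
    using bij_Fs by (intro distr_eq_iff_eq_distr_inverse) (auto simp: bij_is_inj bij_is_surj surj_f_inv_f)
  also have "\<dots> \<longleftrightarrow> Q = P \<Otimes>\<^sub>M distr Q V snd"
    unfolding lift using P Q by (rule distr_swap12_pair_measure_eq_iff)
  finally show ?thesis
    unfolding conj Q_def .
qed

end

theorem proposition2p8:
  fixes Fs :: "'x::polish_space \<times> 'u::polish_space \<Rightarrow> 'tx::polish_space \<times> 'tu::polish_space"
    and mu :: "'x measure" and nu :: "'u measure" and tmu :: "'tx measure"
  assumes bij: "bij Fs"
    and Fs_meas: "Fs \<in> (borel \<Otimes>\<^sub>M borel) \<rightarrow>\<^sub>M (borel \<Otimes>\<^sub>M borel)"
    and Fs_inv_meas: "inv Fs \<in> (borel \<Otimes>\<^sub>M borel) \<rightarrow>\<^sub>M (borel \<Otimes>\<^sub>M borel)"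
    and mu: "prob_space mu" "sets mu = sets (borel :: 'x measure)"
    and nu: "prob_space nu" "sets nu = sets (borel :: 'u measure)"
    and tmu: "prob_space tmu" "sets tmu = sets (borel :: 'tx measure)"
  shows
    "(distr (tmu \<Otimes>\<^sub>M (mu \<Otimes>\<^sub>M nu)) (borel \<Otimes>\<^sub>M borel) (snd \<circ> Finvol Fs) = mu \<Otimes>\<^sub>M nu
      \<longleftrightarrow> distr (tmu \<Otimes>\<^sub>M (mu \<Otimes>\<^sub>M nu)) (borel \<Otimes>\<^sub>M (borel \<Otimes>\<^sub>M borel)) (Finvol Fs)
            = tmu \<Otimes>\<^sub>M (mu \<Otimes>\<^sub>M nu))
     \<and> (distr (tmu \<Otimes>\<^sub>M (mu \<Otimes>\<^sub>M nu)) (borel \<Otimes>\<^sub>M (borel \<Otimes>\<^sub>M borel)) (Finvol Fs)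
            = tmu \<Otimes>\<^sub>M (mu \<Otimes>\<^sub>M nu)
      \<longleftrightarrow> (\<exists>tnu :: 'tu measure. prob_space tnu \<and> sets tnu = sets (borel :: 'tu measure) \<and>
             distr (mu \<Otimes>\<^sub>M nu) (borel \<Otimes>\<^sub>M borel) Fs = tmu \<Otimes>\<^sub>M tnu))"
proof -
  let ?M = "mu \<Otimes>\<^sub>M nu" and ?Q = "distr (mu \<Otimes>\<^sub>M nu) (borel \<Otimes>\<^sub>M borel) Fs"
  have M: "prob_space ?M" "sets ?M = sets (borel \<Otimes>\<^sub>M borel)"
    using prob_space_pair[OF mu(1) nu(1)] sets_pair_measure_cong[OF mu(2) nu(2)] by simp_all
  have "Fs \<in> ?M \<rightarrow>\<^sub>M borel \<Otimes>\<^sub>M borel"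
    using Fs_meas by (simp add: measurable_cong_sets[OF M(2) refl])
  then have Q: "prob_space ?Q" "sets ?Q = sets (borel \<Otimes>\<^sub>M borel)"
    using prob_space.prob_space_distr[OF M(1)] by simp_all
  have "distr (tmu \<Otimes>\<^sub>M ?M) (borel \<Otimes>\<^sub>M borel) (snd \<circ> Finvol Fs) = ?M
      \<longleftrightarrow> ?Q = tmu \<Otimes>\<^sub>M distr ?Q borel snd"
    by (rule distr_snd_Finvol_eq_iff[OF bij Fs_meas Fs_inv_meas tmu M])
  moreover have "distr (tmu \<Otimes>\<^sub>M ?M) (borel \<Otimes>\<^sub>M (borel \<Otimes>\<^sub>M borel)) (Finvol Fs) = tmu \<Otimes>\<^sub>M ?M
      \<longleftrightarrow> ?Q = tmu \<Otimes>\<^sub>M distr ?Q borel snd"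
    by (rule distr_Finvol_eq_iff[OF bij Fs_meas Fs_inv_meas tmu M])
  moreover have "(\<exists>tnu :: 'tu measure. prob_space tnu \<and> sets tnu = sets (borel :: 'tu measure) \<and>
      ?Q = tmu \<Otimes>\<^sub>M tnu) \<longleftrightarrow> ?Q = tmu \<Otimes>\<^sub>M distr ?Q borel snd"
    by (rule ex_pair_measure_eq_iff_snd_marginal[OF tmu(1) Q])
  ultimately show ?thesis
    by blast
qed

end
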